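(* Let $D=\operatorname{diag}(d_1,\dots,d_n)$ with $d_i>0$, $Q=\operatorname{diag}(q_1,\dots,q_n)$ with $q_i>0$, $1\le p\le\infty$, and $L\in\mathbb{R}^{N\times N}$ symmetric with $L\mathbf{1}=0$. Then $\mu_{p,Q}(-L\otimes D)=\mu_p(-L\otimes D)$.
   Context: On $\mathbb{R}^{nN}$, with $u=(u_1^T,\dots,u_N^T)^T$, $u_i\in\mathbb{R}^n$, define $\|u\|_{p,Q}=\big\|(\|Qu_1\|_p,\dots,\|Qu_N\|_p)^T\big\|_p$. For a norm $\|\cdot\|$, the induced logarithmic norm is $\mu(A)=\lim_{h\to0^+}\frac1h(\|I+hA\|-1)$ with the induced operator norm; $\mu_{p,Q}$ and $\mu_p$ are those induced by $\|\cdot\|_{p,Q}$ and the standard $p$-norm on $\mathbb{R}^{nN}$. *)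

theory Defs
  imports "HOL-Analysis.Analysis"
begin

text \<open>Vectors of R^{nN} are represented as u :: real^'n^'N, with block u $ i \<in> R^n
  (i ranges over the N blocks, k over the n components). p ranges over [1, \<infinity>] as an ereal.\<close>

definition pnormv :: "ereal \<Rightarrow> ('a::finite \<Rightarrow> real) \<Rightarrow> real" where
  "pnormv p f = (if p = \<infinity> then Max (range (\<lambda>i. \<bar>f i\<bar>))
                 else (\<Sum>i\<in>UNIV. \<bar>f i\<bar> powr real_of_ereal p) powr (1 / real_of_ereal p))"

definition std_pnorm :: "ereal \<Rightarrow> real^'n::finite^'N::finite \<Rightarrow> real" where
  "std_pnorm p u = pnormv p (\<lambda>(i, k). u $ i $ k)"

definition pQ_norm :: "ereal \<Rightarrow> real^'n::finite \<Rightarrow> real^'n^'N::finite \<Rightarrow> real" where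
  "pQ_norm p q u = pnormv p (\<lambda>i. pnormv p (\<lambda>k. q $ k * u $ i $ k))"

definition op_norm :: "('v \<Rightarrow> real) \<Rightarrow> ('v \<Rightarrow> 'v) \<Rightarrow> real" where
  "op_norm nrm A = (SUP x\<in>{x. nrm x = 1}. nrm (A x))"

definition log_norm :: "('v::real_vector \<Rightarrow> real) \<Rightarrow> ('v \<Rightarrow> 'v) \<Rightarrow> real" where
  "log_norm nrm A = Lim (at_right 0) (\<lambda>h. (op_norm nrm (\<lambda>x. x + h *\<^sub>R A x) - 1) / h)"

definition negLkronD :: "real^'N::finite^'N \<Rightarrow> real^'n::finite \<Rightarrow> real^'n^'N \<Rightarrow> real^'n^'N" where
  "negLkronD L d u = (\<chi> i. \<chi> k. - (\<Sum>j\<in>UNIV. L $ i $ j * d $ k * u $ j $ k))"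

end

theory Submission
  imports Defs
begin

text \<open>Since Q and D are both diagonal, the block-wise scaling u \<mapsto> (I \<otimes> Q) u commutes with
  -L \<otimes> D, and it turns the norm of index p,Q into the standard p-norm (a p-norm of p-norms of
  the blocks is the p-norm of all entries). Conjugating by this invertible linear map
  therefore preserves operator norms of I + h(-L \<otimes> D), hence the logarithmic norm.\<close>

lemma Max_range_case_prod:
  fixes f :: "'a::finite \<Rightarrow> 'b::finite \<Rightarrow> 'c::linorder"
  shows "Max (range (\<lambda>(i, k). f i k)) = Max (range (\<lambda>i. Max (range (f i))))"
proof (rule antisym)
  show "Max (range (\<lambda>(i, k). f i k)) \<le> Max (range (\<lambda>i. Max (range (f i))))"
  proof (rule Max.boundedI)
    fix b assume "b \<in> range (\<lambda>(i, k). f i k)"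
    then obtain i k where b: "b = f i k" by auto
    have "f i k \<le> Max (range (f i))" by simp
    also have "\<dots> \<le> Max (range (\<lambda>i. Max (range (f i))))" by simp
    finally show "b \<le> Max (range (\<lambda>i. Max (range (f i))))" unfolding b .
  qed simp_all
  show "Max (range (\<lambda>i. Max (range (f i)))) \<le> Max (range (\<lambda>(i, k). f i k))"
  proof (rule Max.boundedI)
    fix a assume "a \<in> range (\<lambda>i. Max (range (f i)))"
    then obtain i where a: "a = Max (range (f i))" by auto
    have "f i k \<le> Max (range (\<lambda>(i, k). f i k))" for k
    proof (rule Max_ge)
      show "f i k \<in> range (\<lambda>(i, k). f i k)" by (rule image_eqI[of _ _ "(i, k)"]) simp_all
    qed simp
    then show "a \<le> Max (range (\<lambda>(i, k). f i k))" unfolding a by (simp add: Max.boundedI)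
  qed simp_all
qed

lemma pnormv_nonneg: "pnormv p f \<ge> 0"
proof -
  have "0 \<le> \<bar>f undefined\<bar>" by simp
  also have "\<dots> \<le> Max (range (\<lambda>i. \<bar>f i\<bar>))" by simp
  finally show ?thesis unfolding pnormv_def by simp
qed

lemma pnormv_nested:
  fixes g :: "'a::finite \<Rightarrow> 'b::finite \<Rightarrow> real"
  assumes "0 < p"
  shows "pnormv p (\<lambda>i. pnormv p (g i)) = pnormv p (\<lambda>(i, k). g i k)"
proof (cases "p = \<infinity>")
  case True
  then have "pnormv p (\<lambda>i. pnormv p (g i)) = Max (range (\<lambda>i. pnormv p (g i)))"
    unfolding pnormv_def[of p "\<lambda>i. pnormv p (g i)"] by (simp add: abs_of_nonneg pnormv_nonneg)
  also have "\<dots> = Max (range (\<lambda>i. Max (range (\<lambda>k. \<bar>g i k\<bar>))))"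
    using True by (simp add: pnormv_def)
  also have "\<dots> = Max (range (\<lambda>(i, k). \<bar>g i k\<bar>))"
    by (rule Max_range_case_prod[symmetric])
  also have "\<dots> = pnormv p (\<lambda>(i, k). g i k)"
    using True by (simp add: pnormv_def case_prod_unfold)
  finally show ?thesis .
next
  case False
  define r where "r = real_of_ereal p"
  have "r > 0" using assms False unfolding r_def by (cases p) auto
  then have "\<bar>(\<Sum>k\<in>UNIV. \<bar>g i k\<bar> powr r) powr (1 / r)\<bar> powr r = (\<Sum>k\<in>UNIV. \<bar>g i k\<bar> powr r)" for i
    by (simp add: powr_powr sum_nonneg)
  moreover have "(\<Sum>i\<in>UNIV. \<Sum>k\<in>UNIV. \<bar>g i k\<bar> powr r) = (\<Sum>(i, k)\<in>UNIV. \<bar>g i k\<bar> powr r)"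
    by (simp only: sum.cartesian_product UNIV_Times_UNIV)
  ultimately show ?thesis
    using False unfolding pnormv_def r_def[symmetric] by (simp add: case_prod_beta)
qed

lemma op_norm_conj:
  assumes "surj S" and "\<And>x. S (F x) = G (S x)"
  shows "op_norm (\<lambda>x. nrm (S x)) F = op_norm nrm G"
proof -
  have "S ` {x. nrm (S x) = 1} = {y. nrm y = 1}"
  proof
    show "{y. nrm y = 1} \<subseteq> S ` {x. nrm (S x) = 1}"
    proof
      fix y assume "y \<in> {y. nrm y = 1}"
      moreover obtain x where "y = S x" using assms(1) by (metis surjD)
      ultimately show "y \<in> S ` {x. nrm (S x) = 1}" by simp
    qed
  qed blast
  then have "(SUP x\<in>{x. nrm (S x) = 1}. nrm (G (S x))) = (SUP y\<in>{y. nrm y = 1}. nrm (G y))"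
    by (metis image_image)
  then show ?thesis unfolding op_norm_def assms(2) .
qed

lemma log_norm_conj:
  assumes "linear S" and "surj S" and "\<And>x. S (A x) = B (S x)"
  shows "log_norm (\<lambda>x. nrm (S x)) A = log_norm nrm B"
proof -
  have "S (x + h *\<^sub>R A x) = S x + h *\<^sub>R B (S x)" for h x
    using assms(1,3) by (simp add: linear_add linear_scale)
  then have "op_norm (\<lambda>x. nrm (S x)) (\<lambda>x. x + h *\<^sub>R A x) = op_norm nrm (\<lambda>y. y + h *\<^sub>R B y)" for h
    by (rule op_norm_conj[OF assms(2), where G = "\<lambda>y. y + h *\<^sub>R B y"])
  then show ?thesis unfolding log_norm_def by simp
qed

definition scale_blocks :: "real^'n::finite \<Rightarrow> real^'n^'N::finite \<Rightarrow> real^'n^'N" where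
  "scale_blocks q u = (\<chi> i. \<chi> k. q $ k * u $ i $ k)"

lemma linear_scale_blocks: "linear (scale_blocks q)"
  by (rule linearI) (simp_all add: scale_blocks_def vec_eq_iff algebra_simps)

lemma surj_scale_blocks:
  assumes "\<And>k. q $ k \<noteq> 0"
  shows "surj (scale_blocks q)"
proof -
  have "scale_blocks q (\<chi> i. \<chi> k. y $ i $ k / q $ k) = y" for y
    using assms by (simp add: scale_blocks_def vec_eq_iff)
  then show ?thesis by (rule surjI)
qed

lemma scale_blocks_negLkronD:
  "scale_blocks q (negLkronD L d u) = negLkronD L d (scale_blocks q u)"
  by (simp add: scale_blocks_def negLkronD_def vec_eq_iff sum_distrib_left mult.commute mult.left_commute)

lemma pQ_norm_eq_std_pnorm_scale_blocks:
  assumes "0 < p"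
  shows "pQ_norm p q u = std_pnorm p (scale_blocks q u)"
  using pnormv_nested[OF assms, of "\<lambda>i k. q $ k * u $ i $ k"]
  by (simp add: pQ_norm_def std_pnorm_def scale_blocks_def)

theorem lemma10:
  fixes L :: "real^'N::finite^'N" and d q :: "real^'n::finite" and p :: ereal
  assumes "\<And>k. d $ k > 0" and "\<And>k. q $ k > 0"
    and "1 \<le> p"
    and "transpose L = L" and "L *v (\<chi> j. 1) = 0"
  shows "log_norm (pQ_norm p q) (negLkronD L d) = log_norm (std_pnorm p) (negLkronD L d)"
proof -
  have "0 < p" by (rule order.strict_trans2[OF _ assms(3)]) simp
  then have pQ_norm_eq: "pQ_norm p q = (\<lambda>u. std_pnorm p (scale_blocks q u))"
    by (intro ext pQ_norm_eq_std_pnorm_scale_blocks)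
  have "surj (scale_blocks q :: real^'n^'N \<Rightarrow> _)"
    using assms(2) by (simp add: surj_scale_blocks less_imp_neq[symmetric])
  then show ?thesis
    unfolding pQ_norm_eq
    by (rule log_norm_conj[where S = "scale_blocks q" and A = "negLkronD L d" and B = "negLkronD L d",
          OF linear_scale_blocks _ scale_blocks_negLkronD])
qed

end
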